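(* Let $H=(\mathbb R^n,E)$ be an algebraic $k$-hypergraph, let $P$ be a $d$-dimensional $k$-template, and suppose $L(\mathbb R^d,P)$ is immersible in $H$. Then $H$ contains an $L(\mathbb R^d,P)$.
   Context: Here $1\le d,n<\omega$, $2\le k<\omega$. A $k$-hypergraph $(V,E)$ has nonempty $V$ and $E$ a set of $k$-element subsets of $V$. A $(k,n)$-ary polynomial is a real polynomial $p(x_0,\dots,x_{k-1})$ with each $x_i$ an $n$-tuple of variables; its zero hypergraph is $(\mathbb R^n,E)$ where $E$ consists of the $k$-element sets $\{a_0,\dots,a_{k-1}\}\subseteq\mathbb R^n$ (distinct $a_i$) with $p(a_0,\dots,a_{k-1})=0$; a hypergraph is algebraic if it is such a zero hypergraph. A $d$-dimensional $k$-template is a set $P$ of $d$-tuples with $|P|=k$. If $P,Q$ are $d$-dimensional templates, $Q$ is a homomorphic image of $P$ if there is a surjection $f:P\to Q$ such that for all $x,y\in P$, $i<d$, $x_i=y_i$ implies $f(x)_i=f(y)_i$. For $X=X_0\times\cdots\times X_{d-1}$, $L(X,P)$ is the $k$-hypergraph with vertex set $X$ whose edges are the $k$-templates $Q\subseteq X$ that are homomorphic images of $P$. An open box in $\mathbb R^m$ is a product of $m$ nonempty open intervals. A function $g$ on $A=A_0\times\cdots\times A_{m-1}$ is one-to-one in each coordinate if whenever $i<m$ and $a,b\in A$ satisfy ($a_j=b_j$ iff $j\ne i$), then $g(a)\ne g(b)$. For an open box $B\subseteq\mathbb R^d$, an immersion of $L(B,P)$ into $H$ is a semialgebraic (semialgebraic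 graph) analytic function $f:B\to\mathbb R^n$ that is one-to-one in each coordinate and such that whenever $\{x_0,\dots,x_{k-1}\}$ is an edge of $L(B,P)$ and $f(x_0),\dots,f(x_{k-1})$ are pairwise distinct, $\{f(x_0),\dots,f(x_{k-1})\}\in E$. $L(\mathbb R^d,P)$ is immersible in $H$ if there is an open box $B\subseteq\mathbb R^d$ and an immersion of $L(B,P)$ into $H$. $H$ contains an $H_1=(V_1,E_1)$ if there is a map $V_1\to\mathbb R^n$ that is an isomorphism of $H_1$ onto a subhypergraph $(V',E')$ of $H$ ($V'\subseteq\mathbb R^n$, $E'\subseteq E$). *)

theory Defs
  imports "HOL-Analysis.Analysis"
begin

inductive mpoly_fun :: "'i set \<Rightarrow> (('i \<Rightarrow> real) \<Rightarrow> real) \<Rightarrow> bool" for I where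
  mp_const: "mpoly_fun I (\<lambda>x. c)"
| mp_var: "i \<in> I \<Longrightarrow> mpoly_fun I (\<lambda>x. x i)"
| mp_add: "mpoly_fun I p \<Longrightarrow> mpoly_fun I q \<Longrightarrow> mpoly_fun I (\<lambda>x. p x + q x)"
| mp_mult: "mpoly_fun I p \<Longrightarrow> mpoly_fun I q \<Longrightarrow> mpoly_fun I (\<lambda>x. p x * q x)"

inductive semialgebraic :: "('i \<Rightarrow> real) set \<Rightarrow> bool" where
  sa_eq: "mpoly_fun UNIV p \<Longrightarrow> semialgebraic {x. p x = 0}"
| sa_pos: "mpoly_fun UNIV p \<Longrightarrow> semialgebraic {x. p x > 0}"
| sa_Un: "semialgebraic A \<Longrightarrow> semialgebraic B \<Longrightarrow> semialgebraic (A \<union> B)"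
| sa_Int: "semialgebraic A \<Longrightarrow> semialgebraic B \<Longrightarrow> semialgebraic (A \<inter> B)"
| sa_Compl: "semialgebraic A \<Longrightarrow> semialgebraic (- A)"

text \<open>A function on a set B in R^d to R^n is semialgebraic if its graph
  (a subset of R^(d+n), coordinates indexed by 'd + 'n) is semialgebraic.\<close>
definition semialgebraic_fun :: "(real^'d) set \<Rightarrow> (real^'d \<Rightarrow> real^'n) \<Rightarrow> bool" where
  "semialgebraic_fun B f \<longleftrightarrow>
     semialgebraic {z :: ('d + 'n) \<Rightarrow> real.
        (\<chi> i. z (Inl i)) \<in> B \<and> f (\<chi> i. z (Inl i)) = (\<chi> j. z (Inr j))}"

text \<open>Real analyticity: locally the sum of a (unconditionally, i.e. absolutely)
  convergent power series.\<close>
definition real_analytic_on :: "(real^'d) set \<Rightarrow> (real^'d \<Rightarrow> real^'n) \<Rightarrow> bool" where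
  "real_analytic_on B f \<longleftrightarrow>
     (\<forall>a\<in>B. \<exists>r>0. \<exists>c :: ('d \<Rightarrow> nat) \<Rightarrow> real^'n.
        \<forall>x\<in>ball a r \<inter> B.
          ((\<lambda>\<alpha>. (\<Prod>i\<in>UNIV. (x$i - a$i) ^ \<alpha> i) *\<^sub>R c \<alpha>) has_sum f x) UNIV)"

text \<open>Zero hypergraph of a (k,n)-ary polynomial p: the variables are indexed by
  pairs (i,j) with i < k, j a coordinate of R^n.\<close>
definition zero_edges :: "nat \<Rightarrow> (((nat \<times> 'n) \<Rightarrow> real) \<Rightarrow> real) \<Rightarrow> (real^'n) set set" where
  "zero_edges k p = {S. \<exists>a :: nat \<Rightarrow> real^'n. inj_on a {..<k} \<and> S = a ` {..<k}
                          \<and> p (\<lambda>(i,j). a i $ j) = 0}"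

definition algebraic_hypergraph :: "nat \<Rightarrow> (real^'n) set set \<Rightarrow> bool" where
  "algebraic_hypergraph k E \<longleftrightarrow>
     (\<exists>p. mpoly_fun ({..<k} \<times> UNIV) p \<and> E = zero_edges k p)"

definition hom_image :: "('a^'d) set \<Rightarrow> ('b^'d) set \<Rightarrow> bool" where
  "hom_image P Q \<longleftrightarrow> (\<exists>f. f ` P = Q \<and>
      (\<forall>x\<in>P. \<forall>y\<in>P. \<forall>i. x$i = y$i \<longrightarrow> f x $ i = f y $ i))"

definition L_edges :: "('b^'d) set \<Rightarrow> ('a^'d) set \<Rightarrow> ('b^'d) set set" where
  "L_edges X P = {Q. Q \<subseteq> X \<and> finite Q \<and> card Q = card P \<and> hom_image P Q}"

definition open_box :: "(real^'d) set \<Rightarrow> bool" where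
  "open_box B \<longleftrightarrow> (\<exists>a b. (\<forall>i. a$i < b$i) \<and> B = {x. \<forall>i. a$i < x$i \<and> x$i < b$i})"

definition one_one_each_coord :: "('b^'d) set \<Rightarrow> ('b^'d \<Rightarrow> 'c) \<Rightarrow> bool" where
  "one_one_each_coord A g \<longleftrightarrow>
     (\<forall>i. \<forall>a\<in>A. \<forall>b\<in>A. (\<forall>j. a$j = b$j \<longleftrightarrow> j \<noteq> i) \<longrightarrow> g a \<noteq> g b)"

definition immersion :: "(real^'d) set \<Rightarrow> ('a^'d) set \<Rightarrow> (real^'n) set set
                           \<Rightarrow> (real^'d \<Rightarrow> real^'n) \<Rightarrow> bool" where
  "immersion B P E f \<longleftrightarrow>
     semialgebraic_fun B f \<and> real_analytic_on B f \<and> one_one_each_coord B f \<and>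
     (\<forall>Q\<in>L_edges B P. inj_on f Q \<longrightarrow> f ` Q \<in> E)"

definition immersible :: "('a^'d) set \<Rightarrow> (real^'n) set set \<Rightarrow> bool" where
  "immersible P E \<longleftrightarrow> (\<exists>(B :: (real^'d) set) f. open_box B \<and> immersion B P E f)"

definition contains :: "'v set \<Rightarrow> 'v set set \<Rightarrow> 'w set \<Rightarrow> 'w set set \<Rightarrow> bool" where
  "contains V E V1 E1 \<longleftrightarrow>
     (\<exists>g V' E'. V' \<subseteq> V \<and> E' \<subseteq> E \<and> (\<forall>e\<in>E'. e \<subseteq> V') \<and>
        bij_betw g V1 V' \<and> (\<forall>e. e \<subseteq> V1 \<longrightarrow> (e \<in> E1 \<longleftrightarrow> g ` e \<in> E')))"

end

theory Submission
  imports Defs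
begin

text \<open>An immersion \<open>f\<close> of \<open>L(B,P)\<close> is continuous (being analytic) and injective in each
  coordinate on the open box \<open>B\<close>. A Cantor scheme in \<open>B\<close>, which at every stage shrinks the
  intervals in each coordinate until cells with different binary labels have disjoint
  \<open>f\<close>-images, gives maps \<open>h\<^sub>i\<close> from binary sequences to the sides of \<open>B\<close> such that
  \<open>\<sigma> \<mapsto> f (h\<^sub>1 \<sigma>\<^sub>1, \<dots>, h\<^sub>d \<sigma>\<^sub>d)\<close> is injective. Coding reals by their Dedekind cuts
  along an enumeration of \<open>\<rat>\<close> turns this into a map \<open>\<phi> : \<real>\<^sup>d \<rightarrow> B\<close> acting
  coordinatewise with \<open>f \<circ> \<phi>\<close> injective. Acting coordinatewise, \<open>\<phi>\<close> sends edges of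
  \<open>L(\<real>\<^sup>d,P)\<close> to edges of \<open>L(B,P)\<close>, so \<open>f \<circ> \<phi>\<close> embeds \<open>L(\<real>\<^sup>d,P)\<close> into \<open>H\<close>.\<close>

lemma has_sum_sum:
  fixes g :: "'j \<Rightarrow> 'a \<Rightarrow> 'b::topological_comm_monoid_add"
  assumes "finite J" "\<And>j. j \<in> J \<Longrightarrow> (g j has_sum S j) A"
  shows "((\<lambda>x. \<Sum>j\<in>J. g j x) has_sum (\<Sum>j\<in>J. S j)) A"
  using assms by (induction J rule: finite_induct) (simp_all add: has_sum_add)

definition monomial :: "real^'d \<Rightarrow> ('d \<Rightarrow> nat) \<Rightarrow> real" where
  "monomial x \<alpha> = (\<Prod>i\<in>UNIV. x$i ^ \<alpha> i)"

lemma monomial_const: "monomial (\<chi> i. r) \<alpha> = r ^ (\<Sum>i\<in>UNIV. \<alpha> i)"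
  by (simp add: monomial_def power_sum)

lemma monomial_zero: "\<alpha> \<noteq> (\<lambda>_. 0) \<Longrightarrow> monomial 0 \<alpha> = 0"
  by (auto simp: monomial_def fun_eq_iff)

lemma abs_monomial_le:
  assumes "norm y \<le> t" "t \<le> \<rho>" "0 < \<rho>" "\<alpha> \<noteq> (\<lambda>_. 0)"
  shows "\<bar>monomial y \<alpha>\<bar> \<le> t / \<rho> * \<rho> ^ (\<Sum>i\<in>UNIV. \<alpha> i)"
proof -
  obtain i0 where "\<alpha> i0 \<noteq> 0" using assms(4) by (auto simp: fun_eq_iff)
  moreover have "\<alpha> i0 \<le> (\<Sum>i\<in>UNIV. \<alpha> i)" by (rule member_le_sum) auto
  ultimately obtain m where m: "(\<Sum>i\<in>UNIV. \<alpha> i) = Suc m" using not0_implies_Suc by fastforce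
  have t: "0 \<le> t" using assms(1) norm_ge_zero order_trans by blast
  have "\<bar>monomial y \<alpha>\<bar> = (\<Prod>i\<in>UNIV. \<bar>y$i\<bar> ^ \<alpha> i)"
    by (simp add: monomial_def abs_prod power_abs)
  also have "\<dots> \<le> (\<Prod>i\<in>UNIV. t ^ \<alpha> i)"
    using component_le_norm_cart[of y] assms(1) by (intro prod_mono conjI power_mono) (auto intro: order_trans)
  also have "\<dots> = t * t ^ m" by (metis power_sum power_Suc m)
  also have "\<dots> \<le> t * \<rho> ^ m" using t assms(2) by (intro mult_left_mono power_mono) auto
  also have "\<dots> = t / \<rho> * \<rho> ^ (\<Sum>i\<in>UNIV. \<alpha> i)" using assms(3) by (simp add: m)
  finally show ?thesis .
qed

lemma power_series_majorant_summable:
  fixes c :: "('d::finite \<Rightarrow> nat) \<Rightarrow> real^'n"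
  assumes "(\<lambda>\<alpha>. monomial (\<chi> i. \<rho>) \<alpha> *\<^sub>R c \<alpha>) summable_on UNIV" "0 \<le> \<rho>"
  shows "(\<lambda>\<alpha>. \<rho> ^ (\<Sum>i\<in>UNIV. \<alpha> i) * (\<Sum>j\<in>UNIV. \<bar>c \<alpha> $ j\<bar>)) summable_on UNIV"
proof -
  define T where "T \<alpha> = monomial (\<chi> i. \<rho>) \<alpha> *\<^sub>R c \<alpha>" for \<alpha>
  have "(\<lambda>\<alpha>. \<bar>T \<alpha> $ j\<bar>) summable_on UNIV" for j
  proof -
    have "(\<lambda>\<alpha>. T \<alpha> $ j) summable_on UNIV"
      using summable_on_bounded_linear[OF bounded_linear_vec_nth assms(1)] unfolding T_def .
    then show ?thesis using summable_on_iff_abs_summable_on_real[of "\<lambda>\<alpha>. T \<alpha> $ j"] by simp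
  qed
  then have "((\<lambda>\<alpha>. \<Sum>j\<in>UNIV. \<bar>T \<alpha> $ j\<bar>) has_sum (\<Sum>j\<in>UNIV. infsum (\<lambda>\<alpha>. \<bar>T \<alpha> $ j\<bar>) UNIV)) UNIV"
    by (intro has_sum_sum) auto
  then have "(\<lambda>\<alpha>. \<Sum>j\<in>UNIV. \<bar>T \<alpha> $ j\<bar>) summable_on UNIV" by (rule has_sum_imp_summable)
  then show ?thesis
    using assms(2) by (simp add: T_def monomial_const abs_mult sum_distrib_left)
qed

text \<open>The majorant at the point \<open>a + (\<rho>,\<dots>,\<rho>)\<close> of the ball bounds \<open>f y - f a\<close> by
  \<open>\<parallel>y - a\<parallel> / \<rho>\<close> times its sum, since every non-constant monomial vanishes at \<open>a\<close>.\<close>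
lemma power_series_isCont_center:
  fixes f :: "real^'d \<Rightarrow> real^'n"
  assumes "0 < r"
    and hs: "\<And>x. x \<in> ball a r \<Longrightarrow> ((\<lambda>\<alpha>. monomial (x - a) \<alpha> *\<^sub>R c \<alpha>) has_sum f x) UNIV"
  shows "isCont f a"
proof -
  define T where "T x \<alpha> = monomial (x - a) \<alpha> *\<^sub>R c \<alpha>" for x \<alpha>
  define \<rho> where "\<rho> = r / (2 * real CARD('d))"
  have card: "1 \<le> real CARD('d)" by (simp add: Suc_leI)
  then have "1 < 2 * real CARD('d)" by linarith
  then have \<rho>: "0 < \<rho>" "\<rho> < r" using \<open>0 < r\<close> by (simp_all add: \<rho>_def divide_less_eq)
  have "norm (\<chi> i. \<rho> :: real^'d) \<le> real CARD('d) * \<rho>"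
    using norm_le_l1_cart[of "\<chi> i. \<rho> :: real^'d"] \<rho> by simp
  also have "\<dots> < r" using \<open>0 < r\<close> card by (simp add: \<rho>_def)
  finally have "a + (\<chi> i. \<rho>) \<in> ball a r" by (simp add: dist_norm)
  from hs[OF this] have "(\<lambda>\<alpha>. monomial (\<chi> i. \<rho>) \<alpha> *\<^sub>R c \<alpha>) summable_on UNIV"
    by (auto intro: has_sum_imp_summable)
  define M where "M \<alpha> = \<rho> ^ (\<Sum>i\<in>UNIV. \<alpha> i) * (\<Sum>j\<in>UNIV. \<bar>c \<alpha> $ j\<bar>)" for \<alpha>
  obtain G where G: "(M has_sum G) UNIV"
    using power_series_majorant_summable[OF \<open>_ summable_on UNIV\<close>] \<rho>(1)
    unfolding M_def summable_on_def by auto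
  have bound: "norm (f y - f a) \<le> norm (y - a) / \<rho> * G" if "norm (y - a) \<le> \<rho>" for y
  proof -
    have "y \<in> ball a r" using that \<rho> by (simp add: dist_norm norm_minus_commute)
    then have "((\<lambda>\<alpha>. T y \<alpha> - T a \<alpha>) has_sum (f y - f a)) UNIV"
      using hs[of y] hs[of a] \<open>0 < r\<close> unfolding T_def diff_conv_add_uminus
      by (intro has_sum_add has_sum_uminus[THEN iffD2]) simp_all
    moreover have "((\<lambda>\<alpha>. norm (y - a) / \<rho> * M \<alpha>) has_sum (norm (y - a) / \<rho> * G)) UNIV"
      by (rule has_sum_cmult_right[OF G])
    moreover have "norm (T y \<alpha> - T a \<alpha>) \<le> norm (y - a) / \<rho> * M \<alpha>" for \<alpha>
    proof (cases "\<alpha> = (\<lambda>_. 0)")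
      case True
      then show ?thesis using \<rho> by (simp add: T_def M_def monomial_def sum_nonneg)
    next
      case False
      have "norm (T y \<alpha> - T a \<alpha>) = \<bar>monomial (y - a) \<alpha>\<bar> * norm (c \<alpha>)"
        using False by (simp add: T_def monomial_zero)
      also have "\<dots> \<le> (norm (y - a) / \<rho> * \<rho> ^ (\<Sum>i\<in>UNIV. \<alpha> i)) * (\<Sum>j\<in>UNIV. \<bar>c \<alpha> $ j\<bar>)"
        using abs_monomial_le[OF order_refl that \<rho>(1) False] norm_le_l1_cart[of "c \<alpha>"]
        by (intro mult_mono) auto
      finally show ?thesis by (simp add: M_def mult.assoc)
    qed
    ultimately show ?thesis by (rule norm_infsum_le)
  qed
  have "((\<lambda>y. f y - f a) \<longlongrightarrow> 0) (at a)"
  proof (rule Lim_null_comparison)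
    show "\<forall>\<^sub>F y in at a. norm (f y - f a) \<le> norm (y - a) / \<rho> * G"
      using eventually_at_ball[OF \<rho>(1), of a UNIV]
      by eventually_elim (rule bound, simp add: dist_norm norm_minus_commute)
    show "((\<lambda>y. norm (y - a) / \<rho> * G) \<longlongrightarrow> 0) (at a)"
      using \<rho>(1) by (auto intro!: tendsto_eq_intros)
  qed
  then show ?thesis unfolding isCont_def by (rule LIM_zero_cancel)
qed

lemma real_analytic_on_imp_continuous_on:
  fixes f :: "real^'d \<Rightarrow> real^'n"
  assumes "real_analytic_on B f" "open B"
  shows "continuous_on B f"
  unfolding continuous_on_eq_continuous_at[OF \<open>open B\<close>]
proof
  fix a assume "a \<in> B"
  then obtain r c where "0 < r" and hs: "\<And>x. x \<in> ball a r \<inter> B \<Longrightarrow>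
     ((\<lambda>\<alpha>. (\<Prod>i\<in>UNIV. (x$i - a$i) ^ \<alpha> i) *\<^sub>R c \<alpha>) has_sum f x) UNIV"
    using assms(1) unfolding real_analytic_on_def by blast
  obtain e where "0 < e" "ball a e \<subseteq> B" using assms(2) \<open>a \<in> B\<close> openE by blast
  show "isCont f a"
  proof (rule power_series_isCont_center)
    show "0 < min r e" using \<open>0 < r\<close> \<open>0 < e\<close> by simp
    show "((\<lambda>\<alpha>. monomial (x - a) \<alpha> *\<^sub>R c \<alpha>) has_sum f x) UNIV" if "x \<in> ball a (min r e)" for x
      using hs[of x] that \<open>ball a e \<subseteq> B\<close> by (auto simp: monomial_def)
  qed
qed

definition cell :: "('d \<Rightarrow> 'k \<Rightarrow> real \<times> real) \<Rightarrow> ('d \<Rightarrow> 'k) \<Rightarrow> (real^'d) set" where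
  "cell C s = {u. \<forall>i. fst (C i (s i)) \<le> u$i \<and> u$i \<le> snd (C i (s i))}"

definition intervals_within :: "real^'d \<Rightarrow> real^'d \<Rightarrow> ('d \<Rightarrow> 'k \<Rightarrow> real \<times> real) \<Rightarrow> bool" where
  "intervals_within a b C \<longleftrightarrow>
     (\<forall>i k. a$i < fst (C i k) \<and> fst (C i k) < snd (C i k) \<and> snd (C i k) < b$i)"

definition subintervals :: "('d \<Rightarrow> 'k \<Rightarrow> real \<times> real) \<Rightarrow> ('d \<Rightarrow> 'k \<Rightarrow> real \<times> real) \<Rightarrow> bool" where
  "subintervals D C \<longleftrightarrow> (\<forall>i k. fst (C i k) \<le> fst (D i k) \<and> snd (D i k) \<le> snd (C i k))"

definition separated_cells ::
    "(real^'d \<Rightarrow> 'b) \<Rightarrow> ('d \<Rightarrow> 'k \<Rightarrow> real \<times> real) \<Rightarrow> ('d \<Rightarrow> 'k) \<Rightarrow> ('d \<Rightarrow> 'k) \<Rightarrow> bool" where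
  "separated_cells F C s t \<longleftrightarrow> (\<forall>u\<in>cell C s. \<forall>v\<in>cell C t. F u \<noteq> F v)"

lemma subintervals_refl: "subintervals C C"
  by (simp add: subintervals_def)

lemma subintervals_trans: "subintervals E D \<Longrightarrow> subintervals D C \<Longrightarrow> subintervals E C"
  unfolding subintervals_def by (meson order_trans)

lemma cell_subintervals: "subintervals D C \<Longrightarrow> cell D s \<subseteq> cell C s"
  unfolding subintervals_def cell_def by (auto intro: order_trans)

lemma separated_cells_subintervals:
  "subintervals D C \<Longrightarrow> separated_cells F C s t \<Longrightarrow> separated_cells F D s t"
  unfolding separated_cells_def using cell_subintervals by blast

lemma isCont_cart_componentwise:
  fixes F :: "real^'d \<Rightarrow> 'b::metric_space"
  assumes "isCont F u" "0 < e"
  obtains \<rho> where "0 < \<rho>" "\<And>x. (\<And>i. \<bar>x$i - u$i\<bar> \<le> \<rho>) \<Longrightarrow> dist (F x) (F u) < e"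
proof -
  obtain r where "0 < r" and r: "\<And>x. dist x u < r \<Longrightarrow> dist (F x) (F u) < e"
    using assms unfolding continuous_at_eps_delta by blast
  have card: "1 \<le> real CARD('d)" by (simp add: Suc_leI)
  show thesis
  proof
    show "0 < r / (2 * real CARD('d))" using \<open>0 < r\<close> by simp
    fix x :: "real^'d" assume x: "\<And>i. \<bar>x$i - u$i\<bar> \<le> r / (2 * real CARD('d))"
    have "dist x u \<le> (\<Sum>i\<in>UNIV. \<bar>(x - u) $ i\<bar>)"
      unfolding dist_norm by (rule norm_le_l1_cart)
    also have "\<dots> \<le> real CARD('d) * (r / (2 * real CARD('d)))"
      by (rule sum_bounded_above) (use x in simp)
    also have "\<dots> < r" using \<open>0 < r\<close> card by simp
    finally show "dist (F x) (F u) < e" by (rule r)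
  qed
qed

text \<open>Moving the midpoint of the cell of \<open>t\<close> along the coordinate \<open>j\<close> changes the value
  of \<open>F\<close>, so one of the two points has a value different from that at the midpoint of the
  cell of \<open>s\<close>.\<close>
lemma one_one_each_coord_distinct_values:
  fixes F :: "real^'d \<Rightarrow> 'b"
  assumes inj: "one_one_each_coord (box a b) F" and C: "intervals_within a b C"
    and j: "s j \<noteq> t j"
  obtains u v where "\<forall>i. fst (C i (s i)) < u$i \<and> u$i < snd (C i (s i))"
    "\<forall>i. fst (C i (t i)) < v$i \<and> v$i < snd (C i (t i))"
    "\<forall>i. s i = t i \<longrightarrow> u$i = v$i" "F u \<noteq> F v"
proof -
  define mid where "mid i k = (fst (C i k) + snd (C i k)) / 2" for i k
  have C': "a$i < fst (C i k)" "fst (C i k) < snd (C i k)" "snd (C i k) < b$i" for i k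
    using C unfolding intervals_within_def by auto
  then have mid: "fst (C i k) < mid i k" "mid i k < snd (C i k)" for i k
    unfolding mid_def by auto
  define q where "q = (mid j (t j) + snd (C j (t j))) / 2"
  have q: "fst (C j (t j)) < q" "q < snd (C j (t j))"
    using mid[of j "t j"] unfolding q_def by auto
  define u :: "real^'d" where "u = (\<chi> i. mid i (s i))"
  define w :: "real^'d" where "w = (\<chi> i. mid i (t i))"
  define w' :: "real^'d" where "w' = (\<chi> i. if i = j then q else mid i (t i))"
  have in_t: "\<forall>i. fst (C i (t i)) < x$i \<and> x$i < snd (C i (t i))" if "x = w \<or> x = w'" for x
    using that mid q by (auto simp: w_def w'_def)
  have "x \<in> box a b" if "x = w \<or> x = w'" for x
    unfolding mem_box_cart using in_t[OF that] C' by (meson order_less_trans)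
  then have "w \<in> box a b" "w' \<in> box a b" by simp_all
  moreover have "\<forall>i. w$i = w'$i \<longleftrightarrow> i \<noteq> j"
    using mid[of j "t j"] q by (auto simp: w_def w'_def q_def)
  ultimately have "F w \<noteq> F w'" using inj unfolding one_one_each_coord_def by blast
  then obtain v where "v = w \<or> v = w'" "F u \<noteq> F v" by metis
  moreover have "\<forall>i. s i = t i \<longrightarrow> u$i = v$i" using \<open>v = w \<or> v = w'\<close> j
    by (auto simp: u_def w_def w'_def)
  ultimately show thesis
    using that[of u v] in_t[OF \<open>v = w \<or> v = w'\<close>] mid by (simp add: u_def)
qed

lemma subintervals_around:
  assumes C: "intervals_within a b C" and "0 < \<rho>"
    and u: "\<forall>i. fst (C i (s i)) < u$i \<and> u$i < snd (C i (s i))"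
    and v: "\<forall>i. fst (C i (t i)) < v$i \<and> v$i < snd (C i (t i))"
    and uv: "\<forall>i. s i = t i \<longrightarrow> u$i = v$i"
  obtains D where "intervals_within a b D" "subintervals D C"
    "\<And>x i. x \<in> cell D s \<Longrightarrow> \<bar>x$i - u$i\<bar> \<le> \<rho>" "\<And>x i. x \<in> cell D t \<Longrightarrow> \<bar>x$i - v$i\<bar> \<le> \<rho>"
proof -
  define around where "around c I = (max (fst I) (c - \<rho>), min (snd I) (c + \<rho>))" for c I
  define D where "D i k = (if k = s i then around (u$i) (C i k)
     else if k = t i then around (v$i) (C i k) else C i k)" for i k
  have "intervals_within a b D"
    unfolding intervals_within_def
  proof (intro allI)
    fix i k
    show "a$i < fst (D i k) \<and> fst (D i k) < snd (D i k) \<and> snd (D i k) < b$i"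
      using C[unfolded intervals_within_def, rule_format, of i k] u[rule_format, of i]
        v[rule_format, of i] \<open>0 < \<rho>\<close> unfolding D_def around_def
      by (auto simp: less_max_iff_disj max_less_iff_conj min_less_iff_conj)
  qed
  moreover have "subintervals D C" by (auto simp: subintervals_def D_def around_def)
  moreover have "\<bar>x$i - u$i\<bar> \<le> \<rho>" if "x \<in> cell D s" for x i
  proof -
    have "fst (D i (s i)) \<le> x$i \<and> x$i \<le> snd (D i (s i))" using that by (simp add: cell_def)
    then show ?thesis by (simp add: D_def around_def abs_le_iff)
  qed
  moreover have "\<bar>x$i - v$i\<bar> \<le> \<rho>" if "x \<in> cell D t" for x i
  proof -
    have "fst (D i (t i)) \<le> x$i \<and> x$i \<le> snd (D i (t i))" using that by (simp add: cell_def)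
    then show ?thesis
      using uv[rule_format, of i] by (cases "s i = t i") (auto simp: D_def around_def abs_le_iff)
  qed
  ultimately show thesis using that by blast
qed

lemma subintervals_separating:
  fixes F :: "real^'d \<Rightarrow> 'b::metric_space"
  assumes cont: "continuous_on (box a b) F" and inj: "one_one_each_coord (box a b) F"
    and C: "intervals_within a b C" and "s \<noteq> t"
  obtains D where "intervals_within a b D" "subintervals D C" "separated_cells F D s t"
proof -
  obtain j where "s j \<noteq> t j" using \<open>s \<noteq> t\<close> by auto
  then obtain u v where u: "\<forall>i. fst (C i (s i)) < u$i \<and> u$i < snd (C i (s i))"
    and v: "\<forall>i. fst (C i (t i)) < v$i \<and> v$i < snd (C i (t i))"
    and uv: "\<forall>i. s i = t i \<longrightarrow> u$i = v$i" and "F u \<noteq> F v"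
    using one_one_each_coord_distinct_values[OF inj C] by metis
  have "u \<in> box a b" "v \<in> box a b"
    using u v C unfolding mem_box_cart intervals_within_def by (meson order_less_trans)+
  then have "isCont F u" "isCont F v"
    using cont continuous_on_eq_continuous_at[OF open_box] by auto
  define e where "e = dist (F u) (F v) / 2"
  have "0 < e" using \<open>F u \<noteq> F v\<close> by (simp add: e_def)
  obtain \<rho>u \<rho>v where "0 < \<rho>u" "\<And>x. (\<And>i. \<bar>x$i - u$i\<bar> \<le> \<rho>u) \<Longrightarrow> dist (F x) (F u) < e"
    and "0 < \<rho>v" "\<And>x. (\<And>i. \<bar>x$i - v$i\<bar> \<le> \<rho>v) \<Longrightarrow> dist (F x) (F v) < e"
    using isCont_cart_componentwise[OF \<open>isCont F u\<close> \<open>0 < e\<close>]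
      isCont_cart_componentwise[OF \<open>isCont F v\<close> \<open>0 < e\<close>] by metis
  then have near_u: "\<And>x. (\<And>i. \<bar>x$i - u$i\<bar> \<le> min \<rho>u \<rho>v) \<Longrightarrow> dist (F x) (F u) < e"
    and near_v: "\<And>x. (\<And>i. \<bar>x$i - v$i\<bar> \<le> min \<rho>u \<rho>v) \<Longrightarrow> dist (F x) (F v) < e"
    by (meson min.boundedE)+
  obtain D where D: "intervals_within a b D" "subintervals D C"
    and Ds: "\<And>x i. x \<in> cell D s \<Longrightarrow> \<bar>x$i - u$i\<bar> \<le> min \<rho>u \<rho>v"
    and Dt: "\<And>x i. x \<in> cell D t \<Longrightarrow> \<bar>x$i - v$i\<bar> \<le> min \<rho>u \<rho>v"
    using subintervals_around[OF C _ u v uv, of "min \<rho>u \<rho>v"] \<open>0 < \<rho>u\<close> \<open>0 < \<rho>v\<close> by auto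
  have "separated_cells F D s t"
    unfolding separated_cells_def
  proof (intro ballI notI)
    fix x y assume "x \<in> cell D s" "y \<in> cell D t" "F x = F y"
    have "dist (F u) (F v) \<le> dist (F x) (F u) + dist (F y) (F v)"
      using dist_triangle[of "F u" "F v" "F x"] \<open>F x = F y\<close> by (simp add: dist_commute)
    also have "\<dots> < e + e" using near_u[OF Ds] near_v[OF Dt] \<open>x \<in> cell D s\<close> \<open>y \<in> cell D t\<close>
      by (meson add_strict_mono)
    finally show False by (simp add: e_def)
  qed
  with D show thesis by (rule that)
qed

lemma subintervals_separating_all:
  fixes F :: "real^'d \<Rightarrow> 'b::metric_space"
  assumes cont: "continuous_on (box a b) F" and inj: "one_one_each_coord (box a b) F"
    and "finite PP" "\<forall>(s, t)\<in>PP. s \<noteq> t" "intervals_within a b C"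
  shows "\<exists>D. intervals_within a b D \<and> subintervals D C \<and> (\<forall>(s, t)\<in>PP. separated_cells F D s t)"
  using assms(3-)
proof (induction PP arbitrary: C rule: finite_induct)
  case empty
  then show ?case using subintervals_refl by blast
next
  case (insert p PP)
  obtain s t where p: "p = (s, t)" by fastforce
  have "\<exists>D. intervals_within a b D \<and> subintervals D C \<and> (\<forall>(s, t)\<in>PP. separated_cells F D s t)"
    using insert.IH insert.prems by simp
  then obtain D where D: "intervals_within a b D" "subintervals D C"
    "\<forall>(s, t)\<in>PP. separated_cells F D s t" by blast
  obtain D' where "intervals_within a b D'" "subintervals D' D" "separated_cells F D' s t"
    using subintervals_separating[OF cont inj D(1)] insert.prems p by auto
  with D show ?case
    by (intro exI[of _ D']) (auto simp: p intro: subintervals_trans separated_cells_subintervals)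
qed

definition cantor_level ::
    "(real^'d \<Rightarrow> 'b) \<Rightarrow> real^'d \<Rightarrow> real^'d \<Rightarrow> nat \<Rightarrow> ('d \<Rightarrow> bool list \<Rightarrow> real \<times> real) \<Rightarrow> bool" where
  "cantor_level F a b n C \<longleftrightarrow> intervals_within a b C \<and>
     (\<forall>s t. (\<forall>i. length (s i) = n) \<longrightarrow> (\<forall>i. length (t i) = n) \<longrightarrow> s \<noteq> t \<longrightarrow>
        separated_cells F C s t)"

lemma finite_word_tuples: "finite {s :: 'd::finite \<Rightarrow> 'a::finite list. \<forall>i. length (s i) = n}"
proof (rule finite_subset)
  show "{s :: 'd \<Rightarrow> 'a list. \<forall>i. length (s i) = n} \<subseteq> PiE UNIV (\<lambda>_. {xs. set xs \<subseteq> UNIV \<and> length xs = n})"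
    by (auto simp: PiE_def extensional_def)
  show "finite (PiE (UNIV :: 'd set) (\<lambda>_. {xs :: 'a list. set xs \<subseteq> UNIV \<and> length xs = n}))"
    by (intro finite_PiE finite_lists_length_eq) auto
qed

lemma cantor_level_0:
  assumes "\<forall>i. a$i < b$i"
  shows "\<exists>C. cantor_level F a b 0 C"
proof
  let ?C = "\<lambda>i k. ((3 * a$i + b$i) / 4, (a$i + 3 * b$i) / 4)"
  show "cantor_level F a b 0 ?C"
    using assms by (auto simp: cantor_level_def intervals_within_def field_simps)
qed

lemma cantor_level_Suc:
  fixes F :: "real^'d \<Rightarrow> 'b::metric_space"
  assumes cont: "continuous_on (box a b) F" and inj: "one_one_each_coord (box a b) F"
    and C: "cantor_level F a b n C"
  shows "\<exists>D. cantor_level F a b (Suc n) D \<and> subintervals D (\<lambda>i k. C i (butlast k))"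
proof -
  define T where "T = {s :: 'd \<Rightarrow> bool list. \<forall>i. length (s i) = Suc n}"
  have "finite T" unfolding T_def by (rule finite_word_tuples)
  moreover have "{(s, t) \<in> T \<times> T. s \<noteq> t} \<subseteq> T \<times> T" by blast
  ultimately have fin: "finite {(s, t) \<in> T \<times> T. s \<noteq> t}"
    using finite_subset by blast
  have C': "intervals_within a b (\<lambda>i k. C i (butlast k))"
    using C by (simp add: cantor_level_def intervals_within_def)
  obtain D where "intervals_within a b D" "subintervals D (\<lambda>i k. C i (butlast k))"
    and sep: "\<forall>(s, t)\<in>{(s, t) \<in> T \<times> T. s \<noteq> t}. separated_cells F D s t"
    using subintervals_separating_all[OF cont inj fin _ C'] by auto
  moreover have "separated_cells F D s t"
    if "\<forall>i. length (s i) = Suc n" "\<forall>i. length (t i) = Suc n" "s \<noteq> t" for s t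
    using sep that unfolding T_def by blast
  ultimately show ?thesis unfolding cantor_level_def by blast
qed

lemma nested_intervals_SUP:
  fixes lo hi :: "nat \<Rightarrow> real"
  assumes "incseq lo" "decseq hi" "\<And>n. lo n \<le> hi n"
  shows "lo n \<le> (SUP m. lo m)" "(SUP m. lo m) \<le> hi n"
proof -
  have lo_hi: "lo m \<le> hi n" for m n
  proof -
    have "lo m \<le> lo (max m n)" using \<open>incseq lo\<close> by (simp add: incseq_def)
    also have "\<dots> \<le> hi (max m n)" by (rule assms(3))
    also have "\<dots> \<le> hi n" using \<open>decseq hi\<close> by (simp add: decseq_def)
    finally show ?thesis .
  qed
  then show "lo n \<le> (SUP m. lo m)" by (intro cSUP_upper bdd_aboveI2) auto
  show "(SUP m. lo m) \<le> hi n" using lo_hi by (intro cSUP_least) auto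
qed

text \<open>The digits of \<open>\<sigma> i\<close> select a nested sequence of intervals in coordinate \<open>i\<close>;
  two different \<open>\<sigma>\<close> have different words at some level, where their cells have disjoint images.\<close>
lemma continuous_one_one_each_coord_Cantor_injection:
  fixes F :: "real^'d \<Rightarrow> 'b::metric_space"
  assumes ab: "\<forall>i. a$i < b$i"
    and cont: "continuous_on (box a b) F" and inj: "one_one_each_coord (box a b) F"
  obtains h :: "'d \<Rightarrow> (nat \<Rightarrow> bool) \<Rightarrow> real"
  where "\<And>\<sigma>. (\<chi> i. h i (\<sigma> i)) \<in> box a b" "inj (\<lambda>\<sigma>. F (\<chi> i. h i (\<sigma> i)))"
proof -
  obtain Cs where levels: "\<And>n. cantor_level F a b n (Cs n)"
    and nested: "\<And>n. subintervals (Cs (Suc n)) (\<lambda>i k. Cs n i (butlast k))"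
    using dependent_nat_choice[of "cantor_level F a b" "\<lambda>n C D. subintervals D (\<lambda>i k. C i (butlast k))"]
      cantor_level_0[OF ab] cantor_level_Suc[OF cont inj] by metis
  define word :: "(nat \<Rightarrow> bool) \<Rightarrow> nat \<Rightarrow> bool list" where "word x n = map x [0..<n]" for x n
  define lo where "lo i x n = fst (Cs n i (word x n))" for i x n
  define hi where "hi i x n = snd (Cs n i (word x n))" for i x n
  have step: "fst (Cs n i (word x n)) \<le> fst (Cs (Suc n) i (word x (Suc n))) \<and>
      snd (Cs (Suc n) i (word x (Suc n))) \<le> snd (Cs n i (word x n))" for i x n
  proof -
    have "butlast (word x (Suc n)) = word x n" by (simp add: word_def)
    then show ?thesis using nested[of n] unfolding subintervals_def by metis
  qed
  have "incseq (lo i x)" "decseq (hi i x)" for i x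
    using step by (simp_all add: incseq_SucI decseq_SucI lo_def hi_def)
  moreover have lohi: "a$i < lo i x n" "lo i x n \<le> hi i x n" "hi i x n < b$i" for i x n
    using levels[of n] unfolding cantor_level_def intervals_within_def lo_def hi_def
    by (meson less_imp_le)+
  ultimately have limit: "lo i x n \<le> (SUP m. lo i x m)" "(SUP m. lo i x m) \<le> hi i x n" for i x n
    using nested_intervals_SUP by metis+
  define h where "h i x = (SUP m. lo i x m)" for i x
  have "(\<chi> i. h i (\<sigma> i)) \<in> box a b" for \<sigma>
    unfolding mem_box_cart h_def vec_lambda_beta
    using lohi limit by (meson order_less_le_trans order_le_less_trans)
  moreover have "inj (\<lambda>\<sigma>. F (\<chi> i. h i (\<sigma> i)))"
  proof (rule injI, rule ccontr)
    fix \<sigma> \<tau> :: "'d \<Rightarrow> nat \<Rightarrow> bool"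
    assume eq: "F (\<chi> i. h i (\<sigma> i)) = F (\<chi> i. h i (\<tau> i))" and "\<sigma> \<noteq> \<tau>"
    then obtain i n where "\<sigma> i n \<noteq> \<tau> i n" by (auto simp: fun_eq_iff)
    then have "word (\<sigma> i) (Suc n) ! n \<noteq> word (\<tau> i) (Suc n) ! n"
      by (simp add: word_def del: upt_Suc)
    then have "(\<lambda>i. word (\<sigma> i) (Suc n)) \<noteq> (\<lambda>i. word (\<tau> i) (Suc n))" by metis
    then have "separated_cells F (Cs (Suc n)) (\<lambda>i. word (\<sigma> i) (Suc n)) (\<lambda>i. word (\<tau> i) (Suc n))"
      using levels[of "Suc n"] by (simp add: cantor_level_def word_def)
    moreover have "(\<chi> i. h i (\<rho> i)) \<in> cell (Cs (Suc n)) (\<lambda>i. word (\<rho> i) (Suc n))" for \<rho>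
      using limit unfolding cell_def h_def lo_def hi_def by simp
    ultimately show False using eq unfolding separated_cells_def by blast
  qed
  ultimately show thesis by (rule that)
qed

lemma inj_rational_cuts: "inj (\<lambda>x::real. \<lambda>n. real_of_rat (from_nat n) < x)"
proof -
  have "x \<le> y" if "(\<lambda>n. real_of_rat (from_nat n) < x) = (\<lambda>n. real_of_rat (from_nat n) < y)"
    for x y :: real
  proof (rule ccontr)
    assume "\<not> x \<le> y"
    then obtain q where "y < real_of_rat q" "real_of_rat q < x" using of_rat_dense by (metis not_le)
    with fun_cong[OF that, of "to_nat q"] show False by simp
  qed
  then show ?thesis by (intro injI antisym) auto
qed

lemma L_edges_image:
  assumes "inj_on \<phi> X" "\<phi> ` X \<subseteq> Y"
    and coord: "\<And>x y i. x \<in> X \<Longrightarrow> y \<in> X \<Longrightarrow> x$i = y$i \<Longrightarrow> \<phi> x $ i = \<phi> y $ i"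
    and Q: "Q \<in> L_edges X P"
  shows "\<phi> ` Q \<in> L_edges Y P"
proof -
  have "Q \<subseteq> X" "finite Q" "card Q = card P" and "hom_image P Q"
    using Q unfolding L_edges_def by auto
  then obtain f where f: "f ` P = Q" "\<forall>x\<in>P. \<forall>y\<in>P. \<forall>i. x$i = y$i \<longrightarrow> f x $ i = f y $ i"
    unfolding hom_image_def by blast
  have "hom_image P (\<phi> ` Q)"
    unfolding hom_image_def
  proof (intro exI[of _ "\<phi> \<circ> f"] conjI ballI allI impI)
    show "(\<phi> \<circ> f) ` P = \<phi> ` Q" using f(1) by (metis image_comp)
    fix x y i assume "x \<in> P" "y \<in> P" "x$i = y$i"
    then have "f x \<in> X" "f y \<in> X" "f x $ i = f y $ i" using f \<open>Q \<subseteq> X\<close> by blast+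
    then show "(\<phi> \<circ> f) x $ i = (\<phi> \<circ> f) y $ i" unfolding comp_apply by (rule coord)
  qed
  moreover have "card (\<phi> ` Q) = card P"
    using \<open>card Q = card P\<close> card_image[OF inj_on_subset[OF assms(1) \<open>Q \<subseteq> X\<close>]] by simp
  moreover have "\<phi> ` Q \<subseteq> Y" using assms(2) \<open>Q \<subseteq> X\<close> by blast
  ultimately show ?thesis using \<open>finite Q\<close> unfolding L_edges_def by blast
qed

lemma contains_injection:
  assumes "inj_on g V1" "g ` V1 \<subseteq> V" "\<And>e. e \<in> E1 \<Longrightarrow> e \<subseteq> V1" "\<And>e. e \<in> E1 \<Longrightarrow> g ` e \<in> E"
  shows "contains V E V1 E1"
  unfolding contains_def
proof (intro exI[of _ g] exI[of _ "g ` V1"] exI[of _ "image g ` E1"] conjI allI impI)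
  show "g ` V1 \<subseteq> V" "image g ` E1 \<subseteq> E" "bij_betw g V1 (g ` V1)"
    using assms by (auto simp: bij_betw_def)
  show "\<forall>e'\<in>image g ` E1. e' \<subseteq> g ` V1" using assms(3) by blast
  fix e assume "e \<subseteq> V1"
  then show "e \<in> E1 \<longleftrightarrow> g ` e \<in> image g ` E1"
    using assms(1,3) by (auto simp: inj_on_image_eq_iff)
qed

theorem lemma2p1:
  fixes k :: nat
    and E :: "(real^'n) set set"
    and P :: "(real^'d) set"
  assumes "2 \<le> k"
    and "algebraic_hypergraph k E"
    and "finite P" and "card P = k"
    and "immersible P E"
  shows "contains (UNIV :: (real^'n) set) E (UNIV :: (real^'d) set) (L_edges (UNIV :: (real^'d) set) P)"
proof -
  obtain B and f :: "real^'d \<Rightarrow> real^'n" where "open_box B" and f: "immersion B P E f"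
    using assms(5) unfolding immersible_def by blast
  then obtain a b where ab: "\<forall>i. a$i < b$i" and "B = {x. \<forall>i. a$i < x$i \<and> x$i < b$i}"
    unfolding open_box_def by blast
  then have "B = box a b" by (auto simp: mem_box_cart)
  with f have f: "immersion (box a b) P E f" by simp
  then have "continuous_on (box a b) f" "one_one_each_coord (box a b) f"
    using real_analytic_on_imp_continuous_on open_box unfolding immersion_def by blast+
  then obtain h :: "'d \<Rightarrow> (nat \<Rightarrow> bool) \<Rightarrow> real"
    where hB: "\<And>\<sigma>. (\<chi> i. h i (\<sigma> i)) \<in> box a b" and h: "inj (\<lambda>\<sigma>. f (\<chi> i. h i (\<sigma> i)))"
    by (rule continuous_one_one_each_coord_Cantor_injection[OF ab]) blast
  define cut :: "real \<Rightarrow> nat \<Rightarrow> bool" where "cut x n = (real_of_rat (from_nat n) < x)" for x n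
  define \<phi> :: "real^'d \<Rightarrow> real^'d" where "\<phi> x = (\<chi> i. h i (cut (x$i)))" for x
  have "inj (\<lambda>x::real^'d. \<lambda>i. cut (x$i))"
    using inj_rational_cuts unfolding cut_def by (intro injI) (simp add: vec_eq_iff fun_eq_iff injD)
  from inj_compose[OF h this] have inj_f\<phi>: "inj (f \<circ> \<phi>)" by (simp add: \<phi>_def comp_def)
  then have "inj \<phi>" by (rule inj_on_imageI2)
  have "f ` \<phi> ` Q \<in> E" if "Q \<in> L_edges UNIV P" for Q
  proof -
    have "range \<phi> \<subseteq> box a b" using hB by (auto simp: \<phi>_def)
    then have "\<phi> ` Q \<in> L_edges (box a b) P"
      using L_edges_image[OF \<open>inj \<phi>\<close> _ _ that] by (simp add: \<phi>_def)
    moreover have "inj_on f (\<phi> ` Q)" using inj_f\<phi> by (auto simp: inj_def inj_on_def)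
    ultimately show ?thesis using f unfolding immersion_def by blast
  qed
  then show ?thesis
    using inj_f\<phi> by (intro contains_injection[of "f \<circ> \<phi>"]) (simp_all add: image_comp)
qed

end
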